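(* Let $n\ge2$ and $t\ge1$ be integers, and let $m$ be a nonnegative integer. Then \[W_{t+1}(n)\le\sum_{k=0}^{\lfloor(n-1)/2\rfloor}\frac{2k+2}{n+1}\binom{2n-2k-1}{n}W_t(n-1,k)\] and \[W_{t+1}(n,m)\le\sum_{k=0}^{m}\frac{k+1}{n-k}\binom{n-k}{m+1}\binom{n-k}{m-k}W_t(n-1,k).\]
   Context: Permutations of $[n]$ are written in one-line notation; a descent of $\pi$ is an index $i\in[n-1]$ with $\pi_i>\pi_{i+1}$. The stack-sorting map $s$ is defined recursively by $s(\emptyset)=\emptyset$ and, if the largest entry of $\pi$ is $n$ and $\pi=LnR$, $s(\pi)=s(L)s(R)n$. A permutation $\pi$ of $[n]$ is $t$-stack sortable if $s^t(\pi)=12\cdots n$. $W_t(n)$ is the number of $t$-stack sortable permutations of $[n]$, and $W_t(n,k)$ the number of those with exactly $k$ descents. *)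

theory Defs
  imports Complex_Main
begin

function stack_sort :: "nat list \<Rightarrow> nat list" where
  "stack_sort xs =
     (if xs = [] then []
      else (let m = Max (set xs); i = (LEAST i. xs ! i = m)
            in stack_sort (take i xs) @ stack_sort (drop (Suc i) xs) @ [m]))"
  by pat_completeness auto
termination
proof (relation "measure length")
  fix xs :: "nat list" and m i
  assume "\<not> xs = []" and "m = Max (set xs)" and "i = (LEAST i. xs ! i = m)"
  moreover have "\<exists>j<length xs. xs ! j = Max (set xs)"
    using \<open>\<not> xs = []\<close> by (metis Max_in finite_set in_set_conv_nth set_empty)
  ultimately have "i < length xs"
    by (metis (mono_tags, lifting) LeastI_ex dual_order.strict_trans2 not_less_Least not_less)
  then show "(take i xs, xs) \<in> measure length" "(drop (Suc i) xs, xs) \<in> measure length"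
    by auto
qed auto

definition perms :: "nat \<Rightarrow> nat list set" where
  "perms n = {xs. distinct xs \<and> set xs = {1..n}}"

definition des :: "nat list \<Rightarrow> nat" where
  "des xs = card {i. 1 \<le> i \<and> i < length xs \<and> xs ! (i - 1) > xs ! i}"

definition t_stack_sortable :: "nat \<Rightarrow> nat list \<Rightarrow> bool" where
  "t_stack_sortable t xs \<longleftrightarrow> (stack_sort ^^ t) xs = [1..<length xs + 1]"

definition W :: "nat \<Rightarrow> nat \<Rightarrow> nat" where
  "W t n = card {xs \<in> perms n. t_stack_sortable t xs}"

definition Wk :: "nat \<Rightarrow> nat \<Rightarrow> nat \<Rightarrow> nat" where
  "Wk t n k = card {xs \<in> perms n. t_stack_sortable t xs \<and> des xs = k}"

end

theory Submission
  imports Defs "HOL-Library.Multiset"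
begin

text \<open>Since \<open>s(\<pi>)\<close> ends with \<open>n\<close>, a permutation \<open>\<pi>\<close> of \<open>[n]\<close> is \<open>(t+1)\<close>-stack sortable
  exactly when \<open>s(\<pi>) = \<sigma> n\<close> for a \<open>t\<close>-stack sortable \<open>\<sigma>\<close>, so it suffices to bound the
  fibres of \<open>s\<close> over \<open>\<sigma> n\<close>, refined by descents. More generally, count lists of \<open>h\<close>
  nonempty blocks whose stack-sorted images concatenate to a word \<open>w\<close>, and build \<open>w\<close> letter
  by letter: the new letter \<open>x\<close> is the maximum of the last block, so it forms a block of its
  own or, if \<open>x\<close> is not the bottom of a descent of \<open>w\<close>, it is appended to the last block,
  prepended to it, or glues the last two blocks together. The number of blocks therefore
  follows a weighted Motzkin path that stays positive, and the fibre of \<open>s\<close> corresponds to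
  paths ending at height 1. Those paths are counted by a \<open>2 \<times> 2\<close> determinant of binomial
  coefficients, which gives the refined bound; summing it over the number of descents with
  Vandermonde's identity gives the bound on all \<open>(t+1)\<close>-stack sortable permutations.\<close>

section \<open>Stack sorting and descents\<close>

declare stack_sort.simps[simp del]

lemma stack_sort_Nil[simp]: "stack_sort [] = []"
  by (simp add: stack_sort.simps)

lemma stack_sort_split_Max:
  assumes "xs \<noteq> []"
  obtains A B where "xs = A @ [Max (set xs)] @ B"
    and "stack_sort xs = stack_sort A @ stack_sort B @ [Max (set xs)]"
proof -
  define m where "m = Max (set xs)"
  define i where "i = (LEAST i. xs ! i = m)"
  obtain j where j: "j < length xs" "xs ! j = m"
    using assms unfolding m_def by (metis Max_in finite_set in_set_conv_nth set_empty)
  have xi: "xs ! i = m" unfolding i_def using j(2) by (rule LeastI)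
  have "i < length xs" using j Least_le[of "\<lambda>i. xs ! i = m" j] unfolding i_def by simp
  then have "xs = take i xs @ [m] @ drop (Suc i) xs"
    using id_take_nth_drop xi by fastforce
  moreover have "stack_sort xs = stack_sort (take i xs) @ stack_sort (drop (Suc i) xs) @ [m]"
    by (subst stack_sort.simps) (simp add: assms Let_def m_def i_def)
  ultimately show thesis using that unfolding m_def by blast
qed

lemma mset_stack_sort[simp]: "mset (stack_sort xs) = mset xs"
proof (induction xs rule: length_induct)
  case (1 xs)
  show ?case
  proof (cases "xs = []")
    case False
    then obtain A B where AB: "xs = A @ [Max (set xs)] @ B"
      "stack_sort xs = stack_sort A @ stack_sort B @ [Max (set xs)]"
      by (rule stack_sort_split_Max)
    have "length xs = Suc (length A + length B)"
      by (subst AB(1)) simp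
    then have "length A < length xs" "length B < length xs"
      by simp_all
    with 1 have "mset (stack_sort A) = mset A" "mset (stack_sort B) = mset B" by auto
    moreover have "mset xs = mset A + {#Max (set xs)#} + mset B"
      by (subst AB(1)) simp
    ultimately show ?thesis by (simp add: AB(2))
  qed simp
qed

lemma set_stack_sort[simp]: "set (stack_sort xs) = set xs"
  by (metis mset_stack_sort set_mset_mset)

lemma length_stack_sort[simp]: "length (stack_sort xs) = length xs"
  by (metis mset_stack_sort size_mset)

lemma stack_sort_eq_Nil_iff[simp]: "stack_sort xs = [] \<longleftrightarrow> xs = []"
  by (metis length_stack_sort length_0_conv)

lemma distinct_stack_sort[simp]: "distinct (stack_sort xs) = distinct xs"
  by (rule mset_eq_imp_distinct_iff) simp

lemma last_stack_sort: "xs \<noteq> [] \<Longrightarrow> last (stack_sort xs) = Max (set xs)"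
  by (metis stack_sort_split_Max last_appendR last_snoc append_assoc snoc_eq_iff_butlast)

lemma stack_sort_snoc_greater:
  assumes "\<forall>y\<in>set xs. y < n"
  shows "stack_sort (xs @ [n]) = stack_sort xs @ [n]"
proof -
  have "Max (set (xs @ [n])) = n"
    using assms by (simp add: Max_insert2 less_imp_le)
  moreover have "(LEAST i. (xs @ [n]) ! i = n) = length xs"
  proof (rule Least_equality)
    show "length xs \<le> i" if "(xs @ [n]) ! i = n" for i
      using that assms by (metis leI less_irrefl nth_append nth_mem)
  qed simp
  ultimately show ?thesis
    by (subst stack_sort.simps) (simp add: Let_def)
qed

lemma des_Nil[simp]: "des [] = 0"
  by (simp add: des_def)

lemma des_Cons: "des (x # l) = (if l \<noteq> [] \<and> hd l < x then 1 else 0) + des l"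
proof -
  define D where "D l = {i. 1 \<le> i \<and> i < length l \<and> l ! i < l ! (i - 1)}" for l :: "nat list"
  have split: "D (x # l) = (if l \<noteq> [] \<and> hd l < x then {1} else {}) \<union> Suc ` D l"
  proof (intro set_eqI iffI)
    fix i assume i: "i \<in> D (x # l)"
    show "i \<in> (if l \<noteq> [] \<and> hd l < x then {1} else {}) \<union> Suc ` D l"
    proof (cases "i = 1")
      case False
      with i obtain i' where "i = Suc (Suc i')" unfolding D_def
        by (metis One_nat_def Suc_le_D mem_Collect_eq not0_implies_Suc)
      with i show ?thesis unfolding D_def by auto
    qed (use i in \<open>cases l, auto simp: D_def\<close>)
  next
    fix i assume "i \<in> (if l \<noteq> [] \<and> hd l < x then {1} else {}) \<union> Suc ` D l"
    then show "i \<in> D (x # l)"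
      unfolding D_def by (cases l) (auto simp: nth_Cons' split: if_splits)
  qed
  have "finite (D l)" unfolding D_def by (rule finite_subset[of _ "{..<length l}"]) auto
  moreover have "(if l \<noteq> [] \<and> hd l < x then {1} else {}) \<inter> Suc ` D l = {}"
    unfolding D_def by auto
  ultimately have "card (D (x # l)) = (if l \<noteq> [] \<and> hd l < x then 1 else 0) + card (D l)"
    unfolding split by (simp add: card_Un_disjoint card_image)
  then show ?thesis by (simp add: des_def D_def)
qed

lemma des_append:
  "des (A @ B) = des A + des B + (if A \<noteq> [] \<and> B \<noteq> [] \<and> hd B < last A then 1 else 0)"
  by (induction A) (auto simp: des_Cons)

lemma des_snoc: "des (u @ [x]) = des u + (if u \<noteq> [] \<and> x < last u then 1 else 0)"
  by (simp add: des_append des_Cons)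

lemma des_less_length: "l \<noteq> [] \<Longrightarrow> des l < length l"
proof (induction l)
  case (Cons x l)
  then show ?case by (cases "l = []") (auto simp: des_Cons)
qed simp

section \<open>Weighted Motzkin paths\<close>

text \<open>Paths of length \<open>s\<close> from height \<open>a\<close> to height \<open>b\<close> that never reach
  height 0, built from up steps, two kinds of level steps and down steps; \<open>j\<close> counts the
  steps of the second level kind together with the down steps.\<close>
fun mpaths :: "nat \<Rightarrow> nat \<Rightarrow> nat \<Rightarrow> nat \<Rightarrow> nat" where
  "mpaths a b 0 j = (if a = b \<and> b \<ge> 1 \<and> j = 0 then 1 else 0)"
| "mpaths a b (Suc s) j = (if b = 0 then 0 else mpaths a (b - 1) s j + mpaths a b s j +
      (case j of 0 \<Rightarrow> 0 | Suc j' \<Rightarrow> mpaths a b s j' + mpaths a (b + 1) s j'))"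

lemma mpaths_mono_shift: "mpaths a b s j \<le> mpaths (Suc a) (Suc b) s j"
proof (induction s arbitrary: b j)
  case (Suc s)
  show ?case
  proof (cases "b = 0")
    case False
    have "(case j of 0 \<Rightarrow> 0 | Suc j' \<Rightarrow> mpaths a b s j' + mpaths a (b + 1) s j') \<le>
          (case j of 0 \<Rightarrow> 0 | Suc j' \<Rightarrow> mpaths (Suc a) (Suc b) s j' + mpaths (Suc a) (Suc b + 1) s j')"
      by (cases j) (auto intro: add_mono Suc.IH simp del: mpaths.simps)
    with False Suc.IH[of "b - 1" j] Suc.IH[of b j] show ?thesis
      by (simp del: mpaths.simps(1))
  qed simp
qed simp

lemma mpaths_0_start: "mpaths 0 b s j = 0"
  by (induction s arbitrary: b j) (auto split: nat.splits)

lemma mpaths_Suc_first: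
  "mpaths a b (Suc s) j = (if a = 0 then 0 else mpaths (Suc a) b s j + mpaths a b s j +
     (case j of 0 \<Rightarrow> 0 | Suc j' \<Rightarrow> mpaths a b s j' + mpaths (a - 1) b s j'))"
proof (induction s arbitrary: b j)
  case 0
  show ?case by (auto split: nat.split)
next
  case (Suc s)
  consider "a = 0" | "b = 0" | "a \<noteq> 0" "b \<noteq> 0"
    by blast
  then show ?case
  proof cases
    case 1
    then show ?thesis by (simp del: mpaths.simps add: mpaths_0_start)
  next
    case 2
    then show ?thesis by (simp split: nat.split)
  next
    case 3
    define first_step where "first_step y z = mpaths (Suc a) y s z + mpaths a y s z +
        (case z of 0 \<Rightarrow> 0 | Suc z' \<Rightarrow> mpaths a y s z' + mpaths (a - 1) y s z')" for y z
    define last_step where "last_step x z = mpaths x (b - 1) s z + mpaths x b s z +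
        (case z of 0 \<Rightarrow> 0 | Suc z' \<Rightarrow> mpaths x b s z' + mpaths x (b + 1) s z')" for x z
    have first: "mpaths a y (Suc s) z = first_step y z" for y z
      using 3 Suc.IH unfolding first_step_def by simp
    have last: "mpaths x b (Suc s) z = last_step x z" for x z
      using 3 unfolding last_step_def by simp
    have "mpaths a b (Suc (Suc s)) j = mpaths a (b - 1) (Suc s) j + mpaths a b (Suc s) j +
        (case j of 0 \<Rightarrow> 0 | Suc j' \<Rightarrow> mpaths a b (Suc s) j' + mpaths a (b + 1) (Suc s) j')"
      using 3 by (subst mpaths.simps(2)) (simp only: if_False)
    also have "\<dots> = first_step (b - 1) j + first_step b j +
        (case j of 0 \<Rightarrow> 0 | Suc j' \<Rightarrow> first_step b j' + first_step (b + 1) j')"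
      unfolding first ..
    also have "\<dots> = last_step (Suc a) j + last_step a j +
        (case j of 0 \<Rightarrow> 0 | Suc j' \<Rightarrow> last_step a j' + last_step (a - 1) j')"
      unfolding first_step_def last_step_def using 3 by (simp split: nat.split)
    finally show ?thesis using 3 by (simp only: last) simp
  qed
qed

text \<open>Binomial coefficients extended by 0 to negative lower index, so that the recurrence of
  \<open>paths_det\<close> below holds without case distinctions.\<close>
definition choose_int :: "nat \<Rightarrow> int \<Rightarrow> int" where
  "choose_int L x = (if x < 0 then 0 else int (L choose nat x))"

lemma choose_int_Suc: "choose_int (Suc L) x = choose_int L x + choose_int L (x - 1)"
proof (cases "x \<le> 0")
  case False
  then have "nat x = Suc (nat (x - 1))" by simp
  with False show ?thesis unfolding choose_int_def by simp
qed (auto simp: choose_int_def)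

lemma choose_int_of_nat[simp]: "choose_int L (int x) = int (L choose x)"
  by (simp add: choose_int_def)

lemma choose_int_0: "choose_int 0 x = (if x = 0 then 1 else 0)"
  by (auto simp: choose_int_def)

definition paths_det :: "int \<Rightarrow> nat \<Rightarrow> int \<Rightarrow> int" where
  "paths_det h L m = choose_int L m * choose_int L (m + 1 - h) - choose_int L (m + 1) * choose_int L (m - h)"

lemma paths_det_Suc:
  "paths_det h (Suc L) m = paths_det (h + 1) L m + paths_det h L m + paths_det h L (m - 1)
     + paths_det (h - 1) L (m - 1)"
proof -
  have "m + 1 - h - 1 = m - h" "m - h - 1 = m - (h + 1)" "m + 1 - 1 = m"
    "m - 1 + 1 - h = m - h" "m - 1 - h = m - (h + 1)" "m - 1 + 1 - (h - 1) = m + 1 - h"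
    "m - 1 - (h - 1) = m - h" "m + 1 - (h + 1) = m - h"
    by simp_all
  then show ?thesis unfolding paths_det_def choose_int_Suc by (simp add: algebra_simps)
qed

lemma mpaths_end_1: "int (mpaths h 1 s j) = paths_det (int h) s (int j)"
proof (induction s arbitrary: h j)
  case 0
  show ?case by (auto simp: paths_det_def choose_int_0)
next
  case (Suc s)
  show ?case
  proof (cases "h = 0")
    case True
    then show ?thesis by (simp del: mpaths.simps add: mpaths_0_start paths_det_def)
  next
    case False
    note IH = Suc.IH
    show ?thesis
    proof (cases j)
      case 0
      have "paths_det (int h) s (- 1) = 0" "paths_det (int h - 1) s (- 1) = 0"
        using False by (simp_all add: paths_det_def choose_int_def)
      with False 0 paths_det_Suc[of "int h" s 0] IH show ?thesis
        unfolding mpaths_Suc_first[of h] by (simp add: add.commute)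
    next
      case (Suc j')
      have "int (h - 1) = int h - 1" using False by auto
      with False paths_det_Suc[of "int h" s "int (Suc j')"]
        IH[of "Suc h"] IH[of h] IH[of h j'] IH[of "h - 1" j']
      show ?thesis unfolding mpaths_Suc_first[of h] Suc by (simp add: add.commute)
    qed
  qed
qed

lemma of_nat_diff_mult_choose:
  "(of_nat ((a - y) * (a choose y)) :: 'a :: comm_ring_1) = (of_nat a - of_nat y) * of_nat (a choose y)"
  by (cases "y \<le> a") (simp_all add: of_nat_diff binomial_eq_0)

lemma mpaths_end_1_below: "m < k \<Longrightarrow> mpaths (Suc k) 1 s m = 0"
  using mpaths_end_1[of "Suc k" s m] by (simp add: paths_det_def choose_int_def)

lemma mpaths_end_1_eq_binomials:
  assumes "k \<le> m"
  shows "int (mpaths (Suc k) 1 s m) = int (s choose m) * int (s choose (m - k))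
    - int (s choose Suc m) * int (if m = k then 0 else s choose (m - k - 1))"
proof -
  have "int m + 1 = int (Suc m)" "int (Suc m) - int (Suc k) = int (m - k)"
    using assms by auto
  moreover have "choose_int s (int m - int (Suc k)) = int (if m = k then 0 else s choose (m - k - 1))"
  proof (cases "m = k")
    case False
    with assms have "int m - int (Suc k) = int (m - k - 1)" by auto
    with False show ?thesis by (simp only: choose_int_of_nat if_False)
  qed (simp add: choose_int_def)
  ultimately show ?thesis unfolding mpaths_end_1 paths_det_def by (simp only: choose_int_of_nat)
qed

lemma mpaths_end_1_closed:
  assumes "k \<le> m"
  shows "Suc s * mpaths (Suc k) 1 s m = Suc k * (Suc s choose Suc m) * (Suc s choose (m - k))"
proof -
  define a where "a = Suc s"
  define r where "r = (if m = k then 0 else s choose (m - k - 1))"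
  define X where "X = int (a choose Suc m)"
  define Y where "Y = int (a choose (m - k))"
  have R1: "int a * int (s choose m) = int (Suc m) * X"
    unfolding a_def X_def by (metis Suc_times_binomial of_nat_mult)
  have R2: "int a * int (s choose (m - k)) = (int a - int (m - k)) * Y"
    using binomial_absorb_comp[of a "m - k"] unfolding Y_def a_def
    by (metis diff_Suc_1 of_nat_mult of_nat_diff_mult_choose)
  have R3: "int a * int (s choose Suc m) = (int a - int (Suc m)) * X"
    using binomial_absorb_comp[of a "Suc m"] unfolding X_def a_def
    by (metis diff_Suc_1 of_nat_mult of_nat_diff_mult_choose)
  have R4: "int a * int r = int (m - k) * Y"
  proof (cases "m = k")
    case False
    with assms obtain d where d: "m - k = Suc d" by (metis Suc_diff_Suc le_neq_implies_less)
    with False have "r = s choose d" unfolding r_def by simp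
    then show ?thesis unfolding Y_def d a_def by (metis Suc_times_binomial of_nat_mult)
  qed (simp add: r_def)
  have "int a * (int a * int (mpaths (Suc k) 1 s m)) =
      (int a * int (s choose m)) * (int a * int (s choose (m - k)))
      - (int a * int (s choose Suc m)) * (int a * int r)"
    unfolding mpaths_end_1_eq_binomials[OF assms] r_def[symmetric] by (simp add: algebra_simps)
  also have "\<dots> = int a * (int (Suc k) * X * Y)"
    unfolding R1 R2 R3 R4 using assms by (simp add: of_nat_diff algebra_simps)
  finally have "int a * int (mpaths (Suc k) 1 s m) = int (Suc k) * X * Y"
    unfolding a_def by simp
  then show ?thesis unfolding X_def Y_def a_def by (metis of_nat_mult of_nat_eq_iff)
qed

lemma sum_choose_mult_choose_shift_le:
  "(\<Sum>i<a. (a choose (d + i)) * (a choose i)) \<le> (2 * a) choose (a + d)"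
proof -
  have "a choose i = a choose (a + d - (i + d))" if "i < a" for i
    using that binomial_symmetric[of i a] by simp
  then have "(\<Sum>i<a. (a choose (d + i)) * (a choose i)) =
      (\<Sum>i<a. (a choose (i + d)) * (a choose (a + d - (i + d))))"
    by (intro sum.cong) (auto simp: add.commute)
  also have "\<dots> = (\<Sum>j\<in>(\<lambda>i. i + d) ` {..<a}. (a choose j) * (a choose (a + d - j)))"
    by (simp add: sum.reindex inj_on_def)
  also have "\<dots> \<le> (\<Sum>j\<le>a + d. (a choose j) * (a choose (a + d - j)))"
    by (rule sum_mono2) auto
  also have "\<dots> = (2 * a) choose (a + d)"
    by (simp add: vandermonde mult_2)
  finally show ?thesis .
qed

section \<open>Block decompositions of preimages\<close>

definition block_preimages :: "nat \<Rightarrow> nat list \<Rightarrow> nat \<Rightarrow> nat list list set" where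
  "block_preimages h w j = {ps. length ps = h \<and> (\<forall>p\<in>set ps. p \<noteq> []) \<and> distinct (concat ps)
      \<and> concat (map stack_sort ps) = w \<and> sum_list (map des ps) = j}"

lemma block_preimages_Nil: "block_preimages h [] j = (if h = 0 \<and> j = 0 then {[]} else {})"
proof -
  have no_blocks: "ps = []" if "[] \<notin> set ps" "\<forall>p\<in>set ps. p = []" for ps :: "nat list list"
    using that by (cases ps) auto
  show ?thesis unfolding block_preimages_def by (intro set_eqI) (auto dest: no_blocks)
qed

lemma block_preimages_0: "w \<noteq> [] \<Longrightarrow> block_preimages 0 w j = {}"
  by (auto simp: block_preimages_def)

lemma block_preimages_snoc_decomp:
  assumes "ps \<in> block_preimages h (u @ [x]) j"
  obtains P A B where "ps = P @ [A @ [x] @ B]" "h = Suc (length P)" "\<forall>p\<in>set P. p \<noteq> []"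
    "distinct (concat P @ A @ [x] @ B)" "\<forall>y\<in>set (A @ B). y < x"
    "u = concat (map stack_sort P) @ stack_sort A @ stack_sort B"
    "j = sum_list (map des P) + des (A @ [x] @ B)"
proof -
  have ps: "length ps = h" "\<forall>p\<in>set ps. p \<noteq> []" "distinct (concat ps)"
    "concat (map stack_sort ps) = u @ [x]" "sum_list (map des ps) = j"
    using assms unfolding block_preimages_def by auto
  then have "ps \<noteq> []" by auto
  then obtain P p where psd: "ps = P @ [p]" by (metis append_butlast_last_id)
  with ps(2) have "p \<noteq> []" by auto
  define M where "M = Max (set p)"
  obtain A B where p_eq: "p = A @ [M] @ B" and sort_eq: "stack_sort p = stack_sort A @ stack_sort B @ [M]"
    using stack_sort_split_Max[OF \<open>p \<noteq> []\<close>, folded M_def] .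
  from ps(4) psd sort_eq have "M = x" and u: "u = concat (map stack_sort P) @ stack_sort A @ stack_sort B"
    by auto
  with ps(3) psd p_eq have dist: "distinct (concat P @ A @ [x] @ B)" by simp
  have "y \<le> x" if "y \<in> set (A @ B)" for y
    using that p_eq \<open>M = x\<close> unfolding M_def by (metis Max_ge List.finite_set Un_iff set_append)
  with dist have "\<forall>y\<in>set (A @ B). y < x" by (fastforce simp: le_less)
  with that[of P A B] psd p_eq \<open>M = x\<close> u dist ps show thesis by auto
qed

lemma last_stack_sort_append_less:
  assumes "A @ B \<noteq> []" "\<forall>y\<in>set (A @ B). y < x"
  shows "last (stack_sort A @ stack_sort B) < x"
proof (cases "B = []")
  case True
  with assms have "A \<noteq> []" by simp
  then have "Max (set A) \<in> set A" by simp
  with assms True show ?thesis by (simp add: last_stack_sort)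
next
  case False
  then have "Max (set B) \<in> set B" by simp
  with assms False show ?thesis by (simp add: last_stack_sort)
qed

definition new_block :: "nat \<Rightarrow> nat list list \<Rightarrow> nat list list" where
  "new_block x qs = qs @ [[x]]"

definition snoc_last_block :: "nat \<Rightarrow> nat list list \<Rightarrow> nat list list" where
  "snoc_last_block x qs = butlast qs @ [last qs @ [x]]"

definition cons_last_block :: "nat \<Rightarrow> nat list list \<Rightarrow> nat list list" where
  "cons_last_block x qs = butlast qs @ [x # last qs]"

definition join_last_blocks :: "nat \<Rightarrow> nat list list \<Rightarrow> nat list list" where
  "join_last_blocks x qs = butlast (butlast qs) @ [last (butlast qs) @ x # last qs]"

lemma block_preimages_snoc_subset:
  "block_preimages (Suc h) (u @ [x]) j \<subseteq>
     new_block x ` block_preimages h u j \<union>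
     (if u \<noteq> [] \<and> x < last u then {} else
        snoc_last_block x ` block_preimages (Suc h) u j \<union>
        (case j of 0 \<Rightarrow> {} | Suc j' \<Rightarrow>
           cons_last_block x ` block_preimages (Suc h) u j' \<union>
           join_last_blocks x ` block_preimages (Suc (Suc h)) u j'))"
  (is "_ \<subseteq> ?new \<union> (if _ then {} else ?snoc \<union> ?rest)")
proof
  fix ps assume "ps \<in> block_preimages (Suc h) (u @ [x]) j"
  then obtain P A B where ps: "ps = P @ [A @ [x] @ B]" and len: "Suc h = Suc (length P)"
    and ne: "\<forall>p\<in>set P. p \<noteq> []" and dist: "distinct (concat P @ A @ [x] @ B)"
    and less: "\<forall>y\<in>set (A @ B). y < x"
    and u: "u = concat (map stack_sort P) @ stack_sort A @ stack_sort B"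
    and j: "j = sum_list (map des P) + des (A @ [x] @ B)"
    by (rule block_preimages_snoc_decomp)
  have "A \<noteq> [] \<Longrightarrow> \<not> x < last A" "B \<noteq> [] \<Longrightarrow> hd B < x"
    using less by (metis last_in_set Un_iff set_append not_less_iff_gr_or_eq,
        metis hd_in_set Un_iff set_append)
  then have des_x: "des (A @ [x] @ B) = des A + des B + (if B = [] then 0 else 1)"
    by (auto simp: des_append des_Cons)
  have ascent: "\<not> (u \<noteq> [] \<and> x < last u)" if "A @ B \<noteq> []"
    using last_stack_sort_append_less[OF that less] that unfolding u by auto
  consider "A = []" "B = []" | "A \<noteq> []" "B = []" | "A = []" "B \<noteq> []" | "A \<noteq> []" "B \<noteq> []"
    by blast
  then show "ps \<in> ?new \<union> (if u \<noteq> [] \<and> x < last u then {} else ?snoc \<union> ?rest)"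
  proof cases
    case 1
    then have "P \<in> block_preimages h u j"
      using len ne dist u j des_x unfolding block_preimages_def by simp
    then show ?thesis using 1 ps unfolding new_block_def by auto
  next
    case 2
    then have "P @ [A] \<in> block_preimages (Suc h) u j"
      using len ne dist u j des_x unfolding block_preimages_def by simp
    moreover have "ps = snoc_last_block x (P @ [A])"
      using 2 ps unfolding snoc_last_block_def by simp
    ultimately show ?thesis using ascent 2 by auto
  next
    case 3
    then have "P @ [B] \<in> block_preimages (Suc h) u (j - 1)" and "j = Suc (j - 1)"
      using len ne dist u j des_x unfolding block_preimages_def by auto
    moreover have "ps = cons_last_block x (P @ [B])"
      using 3 ps unfolding cons_last_block_def by simp
    ultimately show ?thesis using ascent 3 by (cases j) auto
  next
    case 4
    then have "P @ [A, B] \<in> block_preimages (Suc (Suc h)) u (j - 1)" and "j = Suc (j - 1)"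
      using len ne dist u j des_x unfolding block_preimages_def by auto
    moreover have "ps = join_last_blocks x (P @ [A, B])"
      using ps unfolding join_last_blocks_def by (simp add: butlast_append)
    ultimately show ?thesis using ascent 4 by (cases j) auto
  qed
qed

lemma finite_block_preimages: "finite (block_preimages h w j)"
proof (induction w arbitrary: h j rule: rev_induct)
  case (snoc x u)
  show ?case
  proof (cases h)
    case (Suc h')
    show ?thesis
      by (rule finite_subset[OF block_preimages_snoc_subset[of h' u x j, folded Suc]])
        (use snoc.IH in \<open>auto split: nat.split\<close>)
  qed (simp add: block_preimages_0)
qed (simp add: block_preimages_Nil)

lemma card_block_preimages_snoc_le:
  "card (block_preimages (Suc h) (u @ [x]) j) \<le> card (block_preimages h u j) +
     (if u \<noteq> [] \<and> x < last u then 0 else card (block_preimages (Suc h) u j) +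
        (case j of 0 \<Rightarrow> 0 | Suc j' \<Rightarrow>
           card (block_preimages (Suc h) u j') + card (block_preimages (Suc (Suc h)) u j')))"
proof -
  have img: "card (f ` block_preimages h' u' j') \<le> card (block_preimages h' u' j')" for f h' u' j'
    by (rule card_image_le[OF finite_block_preimages])
  have "card (block_preimages (Suc h) (u @ [x]) j) \<le> card (new_block x ` block_preimages h u j \<union>
     (if u \<noteq> [] \<and> x < last u then {} else
        snoc_last_block x ` block_preimages (Suc h) u j \<union>
        (case j of 0 \<Rightarrow> {} | Suc j' \<Rightarrow>
           cons_last_block x ` block_preimages (Suc h) u j' \<union>
           join_last_blocks x ` block_preimages (Suc (Suc h)) u j')))"
    by (rule card_mono[OF _ block_preimages_snoc_subset])
      (auto simp: finite_block_preimages split: nat.split)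
  also have "\<dots> \<le> card (block_preimages h u j) +
     (if u \<noteq> [] \<and> x < last u then 0 else card (block_preimages (Suc h) u j) +
        (case j of 0 \<Rightarrow> 0 | Suc j' \<Rightarrow>
           card (block_preimages (Suc h) u j') + card (block_preimages (Suc (Suc h)) u j')))"
    by (cases j) (auto intro!: order.trans[OF card_Un_le] add_mono img)
  finally show ?thesis .
qed

lemma card_block_preimages_le:
  "w \<noteq> [] \<Longrightarrow> card (block_preimages h w j) \<le> mpaths (des w + 1) h (length w - des w - 1) j"
proof (induction w arbitrary: h j rule: rev_induct)
  case (snoc x u)
  show ?case
  proof (cases h)
    case 0
    then show ?thesis by (simp add: block_preimages_0)
  next
    case (Suc h)
    consider "u = []" | "u \<noteq> []" "x < last u" | "u \<noteq> []" "\<not> x < last u"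
      by blast
    then show ?thesis
    proof cases
      case 1
      then show ?thesis
        using card_block_preimages_snoc_le[of h "[]" x j] Suc
        by (auto simp: block_preimages_Nil des_Cons split: nat.splits if_splits)
    next
      case 2
      define k where "k = des u"
      have "k < length u" unfolding k_def using 2(1) by (rule des_less_length)
      have "card (block_preimages (Suc h) (u @ [x]) j) \<le> card (block_preimages h u j)"
        using card_block_preimages_snoc_le[of h u x j] 2 by simp
      also have "\<dots> \<le> mpaths (k + 1) h (length u - k - 1) j"
        using snoc.IH 2 unfolding k_def by simp
      also have "\<dots> \<le> mpaths (Suc (k + 1)) (Suc h) (length u - k - 1) j"
        by (rule mpaths_mono_shift)
      finally show ?thesis
        using 2 \<open>k < length u\<close> Suc unfolding k_def by (simp add: des_snoc)
    next
      case 3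
      define k where "k = des u"
      define s where "s = length u - k - 1"
      have "k < length u" unfolding k_def using 3(1) by (rule des_less_length)
      have "card (block_preimages (Suc h) (u @ [x]) j) \<le> card (block_preimages h u j) +
            (card (block_preimages (Suc h) u j) + (case j of 0 \<Rightarrow> 0 | Suc j' \<Rightarrow>
              card (block_preimages (Suc h) u j') + card (block_preimages (Suc (Suc h)) u j')))"
        using card_block_preimages_snoc_le[of h u x j] 3 by simp
      also have "\<dots> \<le> mpaths (k + 1) h s j + (mpaths (k + 1) (Suc h) s j +
            (case j of 0 \<Rightarrow> 0 | Suc j' \<Rightarrow> mpaths (k + 1) (Suc h) s j' + mpaths (k + 1) (Suc (Suc h)) s j'))"
        using snoc.IH 3 unfolding k_def s_def by (auto intro!: add_mono split: nat.split)
      also have "\<dots> = mpaths (k + 1) (Suc h) (Suc s) j"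
        by (cases j) simp_all
      finally show ?thesis
        using 3 \<open>k < length u\<close> Suc unfolding k_def s_def by (simp add: des_snoc Suc_diff_Suc)
    qed
  qed
qed simp

section \<open>Fibres of stack sorting over permutations\<close>

lemma length_perms: "xs \<in> perms n \<Longrightarrow> length xs = n"
  unfolding perms_def using distinct_card[of xs] by simp

lemma finite_perms: "finite (perms n)"
proof (rule finite_subset)
  show "perms n \<subseteq> {xs. set xs \<subseteq> {1..n} \<and> length xs = n}"
    using length_perms unfolding perms_def by auto
qed (rule finite_lists_length_eq, simp)

lemma set_funpow_stack_sort[simp]: "set ((stack_sort ^^ t) xs) = set xs"
  by (induction t) auto

lemma funpow_stack_sort_snoc_greater:
  "\<forall>y\<in>set xs. y < n \<Longrightarrow> (stack_sort ^^ t) (xs @ [n]) = (stack_sort ^^ t) xs @ [n]"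
  by (induction t) (auto simp: stack_sort_snoc_greater)

lemma t_stack_sortable_Suc: "t_stack_sortable (Suc t) xs = t_stack_sortable t (stack_sort xs)"
  unfolding t_stack_sortable_def funpow_Suc_right by simp

lemma t_stack_sortable_snoc:
  assumes "\<sigma> \<in> perms (n - 1)" "n \<ge> 1"
  shows "t_stack_sortable t (\<sigma> @ [n]) = t_stack_sortable t \<sigma>"
proof -
  have "\<forall>y\<in>set \<sigma>. y < n" using assms unfolding perms_def by auto
  moreover have "[1..<length (\<sigma> @ [n]) + 1] = [1..<length \<sigma> + 1] @ [n]"
    using length_perms[OF assms(1)] assms(2) by simp
  ultimately show ?thesis
    unfolding t_stack_sortable_def by (simp add: funpow_stack_sort_snoc_greater)
qed

lemma stack_sort_perms:
  assumes "\<pi> \<in> perms n" "n \<ge> 1"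
  obtains \<sigma> where "\<sigma> \<in> perms (n - 1)" "stack_sort \<pi> = \<sigma> @ [n]"
proof -
  have \<pi>: "distinct \<pi>" "set \<pi> = {1..n}" using assms(1) unfolding perms_def by auto
  with assms(2) have "\<pi> \<noteq> []" by auto
  have "Max {1..n} = n" using assms(2) by (intro Max_eqI) auto
  with \<pi>(2) \<open>\<pi> \<noteq> []\<close> have "last (stack_sort \<pi>) = n" by (simp add: last_stack_sort)
  then have \<sigma>: "stack_sort \<pi> = butlast (stack_sort \<pi>) @ [n]"
    using \<open>\<pi> \<noteq> []\<close> append_butlast_last_id[of "stack_sort \<pi>"] by simp
  define \<sigma> where "\<sigma> = butlast (stack_sort \<pi>)"
  have "distinct (\<sigma> @ [n])" "set (\<sigma> @ [n]) = {1..n}"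
    using \<pi> \<sigma> unfolding \<sigma>_def by (metis distinct_stack_sort, metis set_stack_sort)
  then have "distinct \<sigma>" "set \<sigma> = {1..n} - {n}" by auto
  moreover have "{1..n} - {n} = {1..n - 1}" by auto
  ultimately have "\<sigma> \<in> perms (n - 1)" unfolding perms_def by simp
  with \<sigma> that show thesis unfolding \<sigma>_def by blast
qed

lemma des_snoc_perms: "\<sigma> \<in> perms (n - 1) \<Longrightarrow> des (\<sigma> @ [n]) = des \<sigma>"
  unfolding perms_def by (auto simp: des_snoc dest: last_in_set)

lemma des_perms_less: "\<sigma> \<in> perms (n - 1) \<Longrightarrow> n \<ge> 1 \<Longrightarrow> des \<sigma> < n"
  using des_less_length[of \<sigma>] length_perms[of \<sigma> "n - 1"] by (cases "\<sigma> = []") auto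

lemma card_fibre_des_le:
  assumes "\<sigma> \<in> perms (n - 1)" "n \<ge> 1"
  shows "card {\<pi> \<in> perms n. stack_sort \<pi> = \<sigma> @ [n] \<and> des \<pi> = m}
    \<le> mpaths (Suc (des \<sigma>)) 1 (n - des \<sigma> - 1) m"
proof -
  have "\<pi> \<noteq> []" if "\<pi> \<in> perms n" for \<pi>
    using that assms(2) length_perms[of \<pi> n] by auto
  then have "card {\<pi> \<in> perms n. stack_sort \<pi> = \<sigma> @ [n] \<and> des \<pi> = m}
      \<le> card (block_preimages 1 (\<sigma> @ [n]) m)"
    by (intro card_inj_on_le[of "\<lambda>\<pi>. [\<pi>]"] finite_block_preimages)
      (auto simp: inj_on_def block_preimages_def perms_def)
  also have "\<dots> \<le> mpaths (des (\<sigma> @ [n]) + 1) 1 (length (\<sigma> @ [n]) - des (\<sigma> @ [n]) - 1) m"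
    by (rule card_block_preimages_le) simp
  finally show ?thesis
    using des_snoc_perms[OF assms(1)] length_perms[OF assms(1)] assms(2) by simp
qed

lemma card_fibre_des_below:
  assumes "\<sigma> \<in> perms (n - 1)" "n \<ge> 1" "m < des \<sigma>"
  shows "{\<pi> \<in> perms n. stack_sort \<pi> = \<sigma> @ [n] \<and> des \<pi> = m} = {}"
proof -
  have "card {\<pi> \<in> perms n. stack_sort \<pi> = \<sigma> @ [n] \<and> des \<pi> = m} = 0"
    using card_fibre_des_le[OF assms(1,2), of m] mpaths_end_1_below[OF assms(3)] by simp
  then show ?thesis using finite_perms by simp
qed

lemma card_fibre_des_le_binomial:
  assumes "\<sigma> \<in> perms (n - 1)" "n \<ge> 1" "des \<sigma> \<le> m"
  shows "(n - des \<sigma>) * card {\<pi> \<in> perms n. stack_sort \<pi> = \<sigma> @ [n] \<and> des \<pi> = m}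
    \<le> Suc (des \<sigma>) * ((n - des \<sigma>) choose Suc m) * ((n - des \<sigma>) choose (m - des \<sigma>))"
proof -
  have "Suc (n - des \<sigma> - 1) = n - des \<sigma>"
    using des_perms_less[OF assms(1,2)] by simp
  note closed = mpaths_end_1_closed[OF assms(3), of "n - des \<sigma> - 1", unfolded this]
  have "(n - des \<sigma>) * card {\<pi> \<in> perms n. stack_sort \<pi> = \<sigma> @ [n] \<and> des \<pi> = m}
      \<le> (n - des \<sigma>) * mpaths (Suc (des \<sigma>)) 1 (n - des \<sigma> - 1) m"
    using card_fibre_des_le[OF assms(1,2)] by (rule mult_le_mono2)
  also have "\<dots> = Suc (des \<sigma>) * ((n - des \<sigma>) choose Suc m) * ((n - des \<sigma>) choose (m - des \<sigma>))"
    by (rule closed)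
  finally show ?thesis .
qed

lemma fibre_subset_des_range:
  assumes "\<sigma> \<in> perms (n - 1)" "n \<ge> 1"
  shows "{\<pi> \<in> perms n. stack_sort \<pi> = \<sigma> @ [n]}
    \<subseteq> (\<Union>i<n - des \<sigma>. {\<pi> \<in> perms n. stack_sort \<pi> = \<sigma> @ [n] \<and> des \<pi> = des \<sigma> + i})"
proof
  fix \<pi> assume \<pi>: "\<pi> \<in> {\<pi> \<in> perms n. stack_sort \<pi> = \<sigma> @ [n]}"
  then have "length \<pi> = n" by (simp add: length_perms)
  with assms(2) have "des \<pi> < n"
    using des_less_length[of \<pi>] by (cases "\<pi> = []") auto
  moreover have "des \<sigma> \<le> des \<pi>"
    using \<pi> card_fibre_des_below[OF assms, of "des \<pi>"] by (cases "des \<pi> < des \<sigma>") auto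
  ultimately show "\<pi> \<in> (\<Union>i<n - des \<sigma>. {\<pi> \<in> perms n. stack_sort \<pi> = \<sigma> @ [n] \<and> des \<pi> = des \<sigma> + i})"
    using \<pi> by (intro UN_I[of "des \<pi> - des \<sigma>"]) auto
qed

lemma card_fibre_le:
  assumes "\<sigma> \<in> perms (n - 1)" "n \<ge> 1"
  shows "(n + 1) * card {\<pi> \<in> perms n. stack_sort \<pi> = \<sigma> @ [n]}
    \<le> (2 * des \<sigma> + 2) * ((2 * n - 2 * des \<sigma> - 1) choose n)"
proof -
  define k where "k = des \<sigma>"
  define a where "a = n - k"
  define C where "C = {\<pi> \<in> perms n. stack_sort \<pi> = \<sigma> @ [n]}"
  define F where "F m = {\<pi> \<in> perms n. stack_sort \<pi> = \<sigma> @ [n] \<and> des \<pi> = m}" for m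
  have "k < n" unfolding k_def using des_perms_less[OF assms] .
  then have a: "n = a + k" "a > 0" unfolding a_def by auto
  have "card C \<le> card (\<Union>i<a. F (k + i))"
    using fibre_subset_des_range[OF assms] finite_perms unfolding C_def F_def a_def k_def
    by (intro card_mono) auto
  also have "\<dots> \<le> (\<Sum>i<a. card (F (k + i)))"
    by (rule card_UN_le) simp
  finally have "a * card C \<le> (\<Sum>i<a. a * card (F (k + i)))"
    by (metis mult_le_mono2 sum_distrib_left)
  also have "\<dots> \<le> (\<Sum>i<a. Suc k * ((a choose (Suc k + i)) * (a choose i)))"
  proof (intro sum_mono)
    fix i
    have "a * card (F (k + i)) \<le> Suc k * (a choose Suc (k + i)) * (a choose (k + i - k))"
      unfolding F_def a_def k_def by (rule card_fibre_des_le_binomial[OF assms]) simp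
    then show "a * card (F (k + i)) \<le> Suc k * ((a choose (Suc k + i)) * (a choose i))"
      by (simp only: add_Suc mult.assoc add_diff_cancel_left')
  qed
  also have "\<dots> \<le> Suc k * ((2 * a) choose (a + Suc k))"
    unfolding sum_distrib_left[symmetric]
    by (rule mult_le_mono2[OF sum_choose_mult_choose_shift_le])
  finally have bound: "a * card C \<le> Suc k * ((2 * a) choose Suc n)"
    using a(1) by simp
  have binom: "Suc n * ((2 * a) choose Suc n) = 2 * a * ((2 * a - 1) choose n)"
    using Suc_times_binomial[of n "2 * a - 1"] a(2) by simp
  have "a * ((n + 1) * card C) = (n + 1) * (a * card C)"
    by (rule mult.left_commute)
  also have "\<dots> \<le> (n + 1) * (Suc k * ((2 * a) choose Suc n))"
    using bound by (rule mult_le_mono2)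
  also have "\<dots> = a * ((2 * k + 2) * ((2 * a - 1) choose n))"
    using binom by (simp add: algebra_simps)
  finally have "(n + 1) * card C \<le> (2 * k + 2) * ((2 * a - 1) choose n)"
    using a(2) by simp
  moreover have "2 * a - 1 = 2 * n - 2 * k - 1"
    unfolding a_def by simp
  ultimately show ?thesis
    unfolding C_def k_def by simp
qed

lemma card_sortable_le_sum_fibres:
  assumes "n \<ge> 1"
  shows "card {\<pi> \<in> perms n. t_stack_sortable (Suc t) \<pi> \<and> P \<pi>}
    \<le> (\<Sum>\<sigma>\<in>{\<sigma> \<in> perms (n - 1). t_stack_sortable t \<sigma>}.
          card {\<pi> \<in> perms n. stack_sort \<pi> = \<sigma> @ [n] \<and> P \<pi>})"
proof -
  let ?S = "{\<sigma> \<in> perms (n - 1). t_stack_sortable t \<sigma>}"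
  have "{\<pi> \<in> perms n. t_stack_sortable (Suc t) \<pi> \<and> P \<pi>}
      \<subseteq> (\<Union>\<sigma>\<in>?S. {\<pi> \<in> perms n. stack_sort \<pi> = \<sigma> @ [n] \<and> P \<pi>})"
  proof
    fix \<pi> assume \<pi>: "\<pi> \<in> {\<pi> \<in> perms n. t_stack_sortable (Suc t) \<pi> \<and> P \<pi>}"
    then obtain \<sigma> where \<sigma>: "\<sigma> \<in> perms (n - 1)" "stack_sort \<pi> = \<sigma> @ [n]"
      using stack_sort_perms[OF _ assms] by blast
    with \<pi> have "t_stack_sortable t \<sigma>"
      using t_stack_sortable_snoc[OF \<sigma>(1) assms] by (simp add: t_stack_sortable_Suc)
    with \<pi> \<sigma> show "\<pi> \<in> (\<Union>\<sigma>\<in>?S. {\<pi> \<in> perms n. stack_sort \<pi> = \<sigma> @ [n] \<and> P \<pi>})"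
      by blast
  qed
  then have "card {\<pi> \<in> perms n. t_stack_sortable (Suc t) \<pi> \<and> P \<pi>}
      \<le> card (\<Union>\<sigma>\<in>?S. {\<pi> \<in> perms n. stack_sort \<pi> = \<sigma> @ [n] \<and> P \<pi>})"
    by (intro card_mono) (auto simp: finite_perms)
  also have "\<dots> \<le> (\<Sum>\<sigma>\<in>?S. card {\<pi> \<in> perms n. stack_sort \<pi> = \<sigma> @ [n] \<and> P \<pi>})"
    by (rule card_UN_le) (simp add: finite_perms)
  finally show ?thesis .
qed

lemma sum_sortable_by_des:
  fixes f :: "nat \<Rightarrow> real"
  assumes "\<And>k. K < k \<Longrightarrow> f k = 0"
  shows "(\<Sum>\<sigma>\<in>{\<sigma> \<in> perms N. t_stack_sortable t \<sigma>}. f (des \<sigma>)) = (\<Sum>k = 0..K. f k * real (Wk t N k))"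
proof -
  let ?S = "{\<sigma> \<in> perms N. t_stack_sortable t \<sigma>}"
  let ?T = "{\<sigma> \<in> ?S. des \<sigma> \<le> K}"
  have "f (des \<sigma>) = 0" if "\<sigma> \<in> ?S - ?T" for \<sigma>
    using that assms by auto
  then have "(\<Sum>\<sigma>\<in>?S. f (des \<sigma>)) = (\<Sum>\<sigma>\<in>?T. f (des \<sigma>))"
    by (intro sum.mono_neutral_right) (auto simp: finite_perms)
  also have "\<dots> = (\<Sum>k = 0..K. \<Sum>\<sigma>\<in>{\<sigma>. \<sigma> \<in> ?T \<and> des \<sigma> = k}. f (des \<sigma>))"
    by (rule sum.group[symmetric]) (auto simp: finite_perms)
  also have "\<dots> = (\<Sum>k = 0..K. f k * real (Wk t N k))"
  proof (intro sum.cong refl)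
    fix k assume "k \<in> {0..K}"
    then have "{\<sigma>. \<sigma> \<in> ?T \<and> des \<sigma> = k} = {\<sigma> \<in> perms N. t_stack_sortable t \<sigma> \<and> des \<sigma> = k}"
      by auto
    then show "(\<Sum>\<sigma>\<in>{\<sigma>. \<sigma> \<in> ?T \<and> des \<sigma> = k}. f (des \<sigma>)) = f k * real (Wk t N k)"
      unfolding Wk_def by simp
  qed
  finally show ?thesis .
qed

lemma W_Suc_le:
  assumes "n \<ge> 1"
  shows "real (W (Suc t) n) \<le> (\<Sum>k = 0..(n - 1) div 2.
    (2 * real k + 2) / (real n + 1) * real ((2 * n - 2 * k - 1) choose n) * real (Wk t (n - 1) k))"
proof -
  let ?S = "{\<sigma> \<in> perms (n - 1). t_stack_sortable t \<sigma>}"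
  define f where "f k = (2 * real k + 2) / (real n + 1) * real ((2 * n - 2 * k - 1) choose n)" for k
  have "W (Suc t) n \<le> (\<Sum>\<sigma>\<in>?S. card {\<pi> \<in> perms n. stack_sort \<pi> = \<sigma> @ [n]})"
    using card_sortable_le_sum_fibres[OF assms, of t "\<lambda>_. True"] unfolding W_def by simp
  then have "real (W (Suc t) n) \<le> real (\<Sum>\<sigma>\<in>?S. card {\<pi> \<in> perms n. stack_sort \<pi> = \<sigma> @ [n]})"
    by (rule of_nat_mono)
  also have "\<dots> = (\<Sum>\<sigma>\<in>?S. real (card {\<pi> \<in> perms n. stack_sort \<pi> = \<sigma> @ [n]}))"
    by (rule of_nat_sum)
  also have "\<dots> \<le> (\<Sum>\<sigma>\<in>?S. f (des \<sigma>))"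
  proof (intro sum_mono)
    fix \<sigma> assume "\<sigma> \<in> ?S"
    then have "real ((n + 1) * card {\<pi> \<in> perms n. stack_sort \<pi> = \<sigma> @ [n]})
        \<le> real ((2 * des \<sigma> + 2) * ((2 * n - 2 * des \<sigma> - 1) choose n))"
      using card_fibre_le[OF _ assms, of \<sigma>] by (simp only: of_nat_le_iff mem_Collect_eq)
    then show "real (card {\<pi> \<in> perms n. stack_sort \<pi> = \<sigma> @ [n]}) \<le> f (des \<sigma>)"
      unfolding f_def by (simp add: field_simps)
  qed
  also have "\<dots> = (\<Sum>k = 0..(n - 1) div 2. f k * real (Wk t (n - 1) k))"
  proof (rule sum_sortable_by_des)
    fix k assume "(n - 1) div 2 < k"
    with assms have "2 * n - 2 * k - 1 < n" by presburger
    then show "f k = 0" unfolding f_def by simp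
  qed
  finally show ?thesis unfolding f_def .
qed

lemma Wk_Suc_le:
  assumes "n \<ge> 1"
  shows "real (Wk (Suc t) n m) \<le> (\<Sum>k = 0..m. (real k + 1) / (real n - real k)
    * real ((n - k) choose (m + 1)) * real ((n - k) choose (m - k)) * real (Wk t (n - 1) k))"
proof -
  let ?S = "{\<sigma> \<in> perms (n - 1). t_stack_sortable t \<sigma>}"
  define f where "f k = (if k \<le> m then (real k + 1) / (real n - real k)
    * real ((n - k) choose (m + 1)) * real ((n - k) choose (m - k)) else 0)" for k
  have "Wk (Suc t) n m \<le> (\<Sum>\<sigma>\<in>?S. card {\<pi> \<in> perms n. stack_sort \<pi> = \<sigma> @ [n] \<and> des \<pi> = m})"
    using card_sortable_le_sum_fibres[OF assms, of t "\<lambda>\<pi>. des \<pi> = m"] unfolding Wk_def by simp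
  then have "real (Wk (Suc t) n m)
      \<le> real (\<Sum>\<sigma>\<in>?S. card {\<pi> \<in> perms n. stack_sort \<pi> = \<sigma> @ [n] \<and> des \<pi> = m})"
    by (rule of_nat_mono)
  also have "\<dots> = (\<Sum>\<sigma>\<in>?S. real (card {\<pi> \<in> perms n. stack_sort \<pi> = \<sigma> @ [n] \<and> des \<pi> = m}))"
    by (rule of_nat_sum)
  also have "\<dots> \<le> (\<Sum>\<sigma>\<in>?S. f (des \<sigma>))"
  proof (intro sum_mono)
    fix \<sigma> assume \<sigma>: "\<sigma> \<in> ?S"
    show "real (card {\<pi> \<in> perms n. stack_sort \<pi> = \<sigma> @ [n] \<and> des \<pi> = m}) \<le> f (des \<sigma>)"
    proof (cases "des \<sigma> \<le> m")
      case True
      have "des \<sigma> < n" using \<sigma> des_perms_less[OF _ assms] by simp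
      moreover have "real ((n - des \<sigma>) * card {\<pi> \<in> perms n. stack_sort \<pi> = \<sigma> @ [n] \<and> des \<pi> = m})
          \<le> real (Suc (des \<sigma>) * ((n - des \<sigma>) choose Suc m) * ((n - des \<sigma>) choose (m - des \<sigma>)))"
        using card_fibre_des_le_binomial[OF _ assms True] \<sigma> by (simp only: of_nat_le_iff mem_Collect_eq)
      ultimately show ?thesis
        using True unfolding f_def by (simp add: field_simps of_nat_diff)
    next
      case False
      from \<sigma> have \<sigma>_perm: "\<sigma> \<in> perms (n - 1)" by simp
      have empty: "{\<pi> \<in> perms n. stack_sort \<pi> = \<sigma> @ [n] \<and> des \<pi> = m} = {}"
        using False by (intro card_fibre_des_below[OF \<sigma>_perm assms]) simp
      show ?thesis unfolding f_def empty using False by simp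
    qed
  qed
  also have "\<dots> = (\<Sum>k = 0..m. f k * real (Wk t (n - 1) k))"
    by (rule sum_sortable_by_des) (simp add: f_def)
  also have "\<dots> = (\<Sum>k = 0..m. (real k + 1) / (real n - real k)
      * real ((n - k) choose (m + 1)) * real ((n - k) choose (m - k)) * real (Wk t (n - 1) k))"
    by (intro sum.cong) (auto simp: f_def)
  finally show ?thesis .
qed

theorem theorem4p1:
  fixes n t m :: nat
  assumes "n \<ge> 2" and "t \<ge> 1"
  shows "(real (W (t + 1) n) \<le>
           (\<Sum>k = 0..(n - 1) div 2.
              (2 * real k + 2) / (real n + 1) * real ((2 * n - 2 * k - 1) choose n)
              * real (Wk t (n - 1) k))) \<and>
         (real (Wk (t + 1) n m) \<le>
           (\<Sum>k = 0..m.
              (real k + 1) / (real n - real k) * real ((n - k) choose (m + 1))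
              * real ((n - k) choose (m - k)) * real (Wk t (n - 1) k)))"
  using W_Suc_le[of n t] Wk_Suc_le[of n t m] assms(1) by simp

end
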